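(* Let $m=2$ attributes, each taking values in $\{1,\dots,d\}$, with $p(\cdot\mid z)$ an additive energy distribution for all $z\in\{1,\dots,d\}^2$. Suppose $\mathcal{Z}^{\mathsf{train}}$ (the support of the training prior) consists of $s$ attribute vectors drawn uniformly at random from $\{1,\dots,d\}^2$, and let $q(x,z)=q(z)q(x\mid z)$ be a test distribution with $q(x\mid z)=p(x\mid z)$ for all $z\in\{1,\dots,d\}^2$ and attribute support $\mathcal{Z}^{\mathsf{test}}\subseteq\{1,\dots,d\}^2$. Let $c>0$. If $s\ge 8cd\log d$ with $d$ sufficiently large, the additive energy classifier satisfies $\hat p(z\mid x)=p(z\mid x)$ for all $z\in\mathcal{Z}^{\mathsf{train}}$ and $x\in\mathbb{R}^n$, and $\hat q(z)=q(z)$ for all $z\in\mathcal{Z}^{\mathsf{test}}$, then with probability greater than $1-\frac1c$ the CRM predictor satisfies $\hat q(z\mid x)=q(z\mid x)$ for all $z\in\mathcal{Z}^{\mathsf{test}}$ and $x\in\mathbb{R}^n$.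
   Context: $\sigma(z)\in\{0,1\}^{2d}$ is the concatenation of one-hot encodings of $z_1,z_2$. An additive energy distribution family is $p(x\mid z)=\frac{1}{\mathbb{Z}(z)}\exp(-\langle\sigma(z),E(x)\rangle)$ with $E:\mathbb{R}^n\to\mathbb{R}^{2d}$, $\mathbb{Z}(z)=\int\exp(-\langle\sigma(z),E(x)\rangle)dx<\infty$, support $\mathbb{R}^n$. Given $\hat E:\mathbb{R}^n\to\mathbb{R}^{2d}$, $\hat B:\mathcal{Z}^{\mathsf{train}}\to\mathbb{R}$, the additive energy classifier is $\hat p(z\mid x)\propto\exp(-\langle\sigma(z),\hat E(x)\rangle+\log p(z)-\hat B(z))$, normalized over $z\in\mathcal{Z}^{\mathsf{train}}$. The extrapolated bias is $B^\star(z)=\log\mathbb{E}_{x\sim p(x)}\big[\exp(-\langle\sigma(z),\hat E(x)\rangle)/\sum_{\tilde z\in\mathcal{Z}^{\mathsf{train}}}\exp(-\langle\sigma(\tilde z),\hat E(x)\rangle+\log p(\tilde z)-\hat B(\tilde z))\big]$, with $p(x)$ the training marginal. Given a distribution $\hat q$ on attributes, the CRM predictor is $\hat q(z\mid x)\propto\exp(-\langle\sigma(z),\hat E(x)\rangle+\log\hat q(z)-B^\star(z))$, normalized over the support of $\hat q$. *)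

theory Defs
  imports "HOL-Analysis.Analysis" "HOL-Probability.Probability"
begin

definition grid :: "nat \<Rightarrow> (nat \<times> nat) set" where
  "grid d = {1..d} \<times> {1..d}"

text \<open>sigma(z) in {0,1}^(2d): concatenation of the one-hot encodings of z1 and z2.
  Coordinates are indexed by 0..<2d; coordinate z1-1 encodes z1, coordinate d+z2-1 encodes z2.\<close>
definition sigma :: "nat \<Rightarrow> nat \<times> nat \<Rightarrow> nat \<Rightarrow> real" where
  "sigma d z i = (if i = fst z - 1 \<or> i = d + snd z - 1 then 1 else 0)"

definition senergy :: "nat \<Rightarrow> nat \<times> nat \<Rightarrow> (nat \<Rightarrow> real) \<Rightarrow> real" where
  "senergy d z e = (\<Sum>i<2*d. sigma d z i * e i)"

definition partition :: "nat \<Rightarrow> ('x::euclidean_space \<Rightarrow> nat \<Rightarrow> real) \<Rightarrow> nat \<times> nat \<Rightarrow> real" where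
  "partition d E z = (\<integral>x. exp (- senergy d z (E x)) \<partial>lborel)"

definition cond_density :: "nat \<Rightarrow> ('x::euclidean_space \<Rightarrow> nat \<Rightarrow> real) \<Rightarrow> nat \<times> nat \<Rightarrow> 'x \<Rightarrow> real" where
  "cond_density d E z x = exp (- senergy d z (E x)) / partition d E z"

definition bayes_post :: "(nat \<times> nat) set \<Rightarrow> (nat \<times> nat \<Rightarrow> real) \<Rightarrow> (nat \<times> nat \<Rightarrow> 'x \<Rightarrow> real)
    \<Rightarrow> nat \<times> nat \<Rightarrow> 'x \<Rightarrow> real" where
  "bayes_post Z r dens z x = r z * dens z x / (\<Sum>z'\<in>Z. r z' * dens z' x)"

definition marginal :: "(nat \<times> nat) set \<Rightarrow> (nat \<times> nat \<Rightarrow> real) \<Rightarrow> (nat \<times> nat \<Rightarrow> 'x \<Rightarrow> real) \<Rightarrow> 'x \<Rightarrow> real" where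
  "marginal Z r dens x = (\<Sum>z\<in>Z. r z * dens z x)"

definition aec_norm :: "nat \<Rightarrow> (nat \<times> nat) set \<Rightarrow> (nat \<times> nat \<Rightarrow> real) \<Rightarrow> ('x \<Rightarrow> nat \<Rightarrow> real)
    \<Rightarrow> (nat \<times> nat \<Rightarrow> real) \<Rightarrow> 'x \<Rightarrow> real" where
  "aec_norm d Ztr ptr Ehat Bhat x =
     (\<Sum>z'\<in>Ztr. exp (- senergy d z' (Ehat x) + ln (ptr z') - Bhat z'))"

definition aec_post :: "nat \<Rightarrow> (nat \<times> nat) set \<Rightarrow> (nat \<times> nat \<Rightarrow> real) \<Rightarrow> ('x \<Rightarrow> nat \<Rightarrow> real)
    \<Rightarrow> (nat \<times> nat \<Rightarrow> real) \<Rightarrow> nat \<times> nat \<Rightarrow> 'x \<Rightarrow> real" where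
  "aec_post d Ztr ptr Ehat Bhat z x =
     exp (- senergy d z (Ehat x) + ln (ptr z) - Bhat z) / aec_norm d Ztr ptr Ehat Bhat x"

text \<open>Extrapolated bias B*(z) = log E_{x ~ p(x)}[exp(-<sigma(z),Ehat(x)>) / aec_norm(x)],
  the expectation over the training marginal written as a Lebesgue integral against its density.\<close>
definition extrap_bias :: "nat \<Rightarrow> (nat \<times> nat) set \<Rightarrow> (nat \<times> nat \<Rightarrow> real)
    \<Rightarrow> (nat \<times> nat \<Rightarrow> 'x::euclidean_space \<Rightarrow> real) \<Rightarrow> ('x \<Rightarrow> nat \<Rightarrow> real)
    \<Rightarrow> (nat \<times> nat \<Rightarrow> real) \<Rightarrow> nat \<times> nat \<Rightarrow> real" where
  "extrap_bias d Ztr ptr dens Ehat Bhat z =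
     ln (\<integral>x. marginal Ztr ptr dens x *
               (exp (- senergy d z (Ehat x)) / aec_norm d Ztr ptr Ehat Bhat x) \<partial>lborel)"

definition crm_post :: "nat \<Rightarrow> (nat \<times> nat) set \<Rightarrow> (nat \<times> nat \<Rightarrow> real) \<Rightarrow> ('x \<Rightarrow> nat \<Rightarrow> real)
    \<Rightarrow> (nat \<times> nat \<Rightarrow> real) \<Rightarrow> nat \<times> nat \<Rightarrow> 'x \<Rightarrow> real" where
  "crm_post d Zq qhat Ehat Bstar z x =
     exp (- senergy d z (Ehat x) + ln (qhat z) - Bstar z) /
     (\<Sum>z'\<in>Zq. exp (- senergy d z' (Ehat x) + ln (qhat z') - Bstar z'))"

end

theory Submission
  imports Defs "HOL-Real_Asymp.Real_Asymp"
begin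

text \<open>Regard the attribute pairs as the edges of the bipartite graph between the values of
  \<open>z\<^sub>1\<close> and those of \<open>z\<^sub>2\<close>. On the training support, agreement of the classifier with the
  Bayes posterior forces the learned energy to differ from the true one by \<open>g(x) + k(z)\<close>. Energies
  are additive in \<open>(z\<^sub>1, z\<^sub>2)\<close>, so this decomposition propagates along edges and holds on the whole
  grid as soon as the training support connects the graph; the extrapolated bias then absorbs
  \<open>k(z)\<close> and the CRM predictor equals the Bayes posterior under \<open>q\<close>. A uniform sample of
  \<open>s \<ge> 8 d ln d\<close> pairs is disconnected only if it avoids the crossing pairs of some cut, and a
  union bound over all cuts gives failure probability at most \<open>2((1 + d\<^sup>-\<^sup>4)\<^sup>2\<^sup>d - 1) \<rightarrow> 0\<close>.\<close>

lemma senergy_grid: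
  assumes "(i, j) \<in> grid d"
  shows "senergy d (i, j) e = e (i - 1) + e (d + j - 1)"
proof -
  have ij: "1 \<le> i" "i \<le> d" "1 \<le> j" "j \<le> d"
    using assms by (auto simp: grid_def)
  have "senergy d (i, j) e
      = (\<Sum>k<2*d. (if k = i - 1 then e k else 0) + (if k = d + j - 1 then e k else 0))"
    unfolding senergy_def sigma_def using ij by (intro sum.cong) auto
  also have "\<dots> = e (i - 1) + e (d + j - 1)"
    using ij by (simp add: sum.distrib; linarith)
  finally show ?thesis .
qed

definition noncrossing :: "nat \<Rightarrow> nat set \<Rightarrow> nat set \<Rightarrow> (nat \<times> nat) set" where
  "noncrossing d S T = S \<times> T \<union> ({1..d} - S) \<times> ({1..d} - T)"

text \<open>Connectivity of the bipartite graph with edge set \<open>Z\<close>: no edge may cross between the vertex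
  sets \<open>S \<union> T\<close> and its complement unless the complement is empty. Requiring \<open>S \<noteq> {}\<close> loses
  nothing, since a cut and its complement have the same noncrossing pairs.\<close>
definition grid_connected :: "nat \<Rightarrow> (nat \<times> nat) set \<Rightarrow> bool" where
  "grid_connected d Z \<longleftrightarrow> (\<forall>S T. S \<subseteq> {1..d} \<longrightarrow> T \<subseteq> {1..d} \<longrightarrow> S \<noteq> {} \<longrightarrow>
      Z \<subseteq> noncrossing d S T \<longrightarrow> S = {1..d} \<and> T = {1..d})"

lemma grid_connected_nonempty:
  assumes "grid_connected d Z" "grid d \<noteq> {}"
  shows "Z \<noteq> {}"
proof
  assume "Z = {}"
  then have "{1..d} = {1..d} \<and> {} = {1..d}"
    using assms(1) unfolding grid_connected_def by blast
  then show False using assms(2) by (simp add: grid_def)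
qed

lemma grid_connected_additive_extend:
  fixes u v :: "nat \<Rightarrow> real"
  assumes conn: "grid_connected d Z" and Z: "Z \<subseteq> grid d"
    and on_Z: "\<And>i j. (i, j) \<in> Z \<Longrightarrow> u i + v j = c"
    and ij: "(i, j) \<in> grid d"
  shows "u i + v j = c"
proof -
  have "Z \<noteq> {}"
    using grid_connected_nonempty[OF conn] ij by blast
  then obtain i0 j0 where ij0: "(i0, j0) \<in> Z"
    by auto
  define S where "S = {i \<in> {1..d}. u i = u i0}"
  define T where "T = {j \<in> {1..d}. v j = c - u i0}"
  have "Z \<subseteq> noncrossing d S T"
  proof
    fix z assume z: "z \<in> Z"
    obtain a b where ab: "z = (a, b)"
      by (cases z)
    have "a \<in> {1..d}" "b \<in> {1..d}"
      using z ab Z by (auto simp: grid_def)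
    moreover have "u a + v b = c"
      using on_Z z ab by blast
    then have "a \<in> S \<longleftrightarrow> b \<in> T"
      using \<open>a \<in> {1..d}\<close> \<open>b \<in> {1..d}\<close> unfolding S_def T_def by auto
    ultimately show "z \<in> noncrossing d S T"
      unfolding noncrossing_def ab by blast
  qed
  moreover have "i0 \<in> S"
    using ij0 Z by (auto simp: S_def grid_def)
  moreover have "S \<subseteq> {1..d}" "T \<subseteq> {1..d}"
    by (auto simp: S_def T_def)
  ultimately have "S = {1..d} \<and> T = {1..d}"
    using conn unfolding grid_connected_def by blast
  then have "i \<in> S" "j \<in> T"
    using ij by (auto simp: grid_def)
  then show ?thesis
    by (simp add: S_def T_def)
qed

lemma senergy_shift_extend:
  fixes e e' :: "'x::zero \<Rightarrow> nat \<Rightarrow> real"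
  assumes conn: "grid_connected d Z" and Z: "Z \<subseteq> grid d"
    and shift: "\<And>z x. z \<in> Z \<Longrightarrow> senergy d z (e x) - senergy d z (e' x) = g x + k z"
  obtains K where "\<And>z x. z \<in> grid d \<Longrightarrow> senergy d z (e x) - senergy d z (e' x) = g x + K z"
proof
  define r where "r z x = senergy d z (e x) - senergy d z (e' x) - g x" for z x
  fix z x assume z: "z \<in> grid d"
  define u where "u i = (e x (i - 1) - e' x (i - 1)) - (e 0 (i - 1) - e' 0 (i - 1))" for i
  define v where
    "v j = (e x (d + j - 1) - e' x (d + j - 1)) - (e 0 (d + j - 1) - e' 0 (d + j - 1))" for j
  have r_diff: "r (i, j) x - r (i, j) 0 = u i + v j - (g x - g 0)" if "(i, j) \<in> grid d" for i j
    using that by (simp add: r_def u_def v_def senergy_grid)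
  have "u i + v j = g x - g 0" if ij: "(i, j) \<in> Z" for i j
  proof -
    have "r (i, j) x = k (i, j)" "r (i, j) 0 = k (i, j)"
      using shift[OF ij] by (simp_all add: r_def)
    then show ?thesis
      using r_diff[of i j] ij Z by auto
  qed
  moreover obtain a b where ab: "z = (a, b)"
    by (cases z)
  ultimately have "u a + v b = g x - g 0"
    using grid_connected_additive_extend[OF conn Z] z by blast
  then have "r z x = r z 0"
    using r_diff[of a b] z ab by simp
  then show "senergy d z (e x) - senergy d z (e' x) = g x + r z 0"
    by (simp add: r_def)
qed

lemma partition_pos:
  fixes E :: "'x::euclidean_space \<Rightarrow> nat \<Rightarrow> real"
  assumes "integrable lborel (\<lambda>x. exp (- senergy d z (E x)))"
  shows "partition d E z > 0"
proof -
  have "partition d E z \<ge> 0"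
    unfolding partition_def by (intro integral_nonneg_AE) auto
  moreover have "partition d E z \<noteq> 0"
  proof
    assume "partition d E z = 0"
    then have "AE x in lborel. exp (- senergy d z (E x)) = 0"
      using integral_nonneg_eq_0_iff_AE[OF assms] unfolding partition_def by auto
    then have "ae_filter (lborel :: 'x measure) = bot"
      by (simp add: trivial_limit_def)
    then show False
      by (simp add: ae_filter_eq_bot_iff)
  qed
  ultimately show ?thesis
    by linarith
qed

lemma aec_post_eq_bayes_post_imp_senergy_diff:
  fixes E Ehat :: "'x::euclidean_space \<Rightarrow> nat \<Rightarrow> real" and d :: nat
    and Ztr :: "(nat \<times> nat) set" and ptr Bhat :: "nat \<times> nat \<Rightarrow> real"
  defines "P \<equiv> marginal Ztr ptr (cond_density d E)" and "N \<equiv> aec_norm d Ztr ptr Ehat Bhat"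
  assumes post: "aec_post d Ztr ptr Ehat Bhat z x = bayes_post Ztr ptr (cond_density d E) z x"
    and pos: "ptr z > 0" "partition d E z > 0" "P x > 0" "N x > 0"
  shows "senergy d z (Ehat x) - senergy d z (E x)
    = (ln (P x) - ln (N x)) + (ln (partition d E z) - Bhat z)"
proof -
  have "exp (- senergy d z (Ehat x) + ln (ptr z) - Bhat z) / N x
      = ptr z * (exp (- senergy d z (E x)) / partition d E z) / P x"
    using post unfolding aec_post_def bayes_post_def cond_density_def P_def N_def marginal_def .
  then have "ln (exp (- senergy d z (Ehat x) + ln (ptr z) - Bhat z) / N x)
      = ln (ptr z * (exp (- senergy d z (E x)) / partition d E z) / P x)"
    by simp
  then show ?thesis
    using pos by (simp add: ln_div ln_mult)
qed

lemma extrap_bias_eq_of_senergy_diff: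
  fixes E Ehat :: "'x::euclidean_space \<Rightarrow> nat \<Rightarrow> real" and d :: nat
    and Ztr :: "(nat \<times> nat) set" and ptr Bhat :: "nat \<times> nat \<Rightarrow> real"
  defines "P \<equiv> marginal Ztr ptr (cond_density d E)" and "N \<equiv> aec_norm d Ztr ptr Ehat Bhat"
  assumes diff: "\<And>x. senergy d z (Ehat x) - senergy d z (E x) = (ln (P x) - ln (N x)) + K"
    and pos: "\<And>x. P x > 0" "\<And>x. N x > 0" "partition d E z > 0"
  shows "extrap_bias d Ztr ptr (cond_density d E) Ehat Bhat z = ln (partition d E z) - K"
proof -
  have "P x * (exp (- senergy d z (Ehat x)) / N x) = exp (- K) * exp (- senergy d z (E x))" for x
  proof -
    have "exp (- senergy d z (Ehat x)) = exp (- senergy d z (E x) - ln (P x) + ln (N x) - K)"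
      using diff[of x] by (simp add: algebra_simps)
    also have "\<dots> = exp (- senergy d z (E x)) / P x * N x * exp (- K)"
      using pos(1,2)[of x] by (simp add: exp_diff exp_add exp_minus field_simps)
    finally show ?thesis
      using pos(1,2)[of x] by simp
  qed
  then have "extrap_bias d Ztr ptr (cond_density d E) Ehat Bhat z = ln (exp (- K) * partition d E z)"
    unfolding extrap_bias_def partition_def P_def N_def by simp
  then show ?thesis
    using pos(3) by (simp add: ln_mult)
qed

text \<open>The numerators of \<open>crm_post\<close> are those of the Bayes posterior times \<open>N x / P x\<close>, which
  cancels in the normalisation.\<close>
lemma crm_post_eq_bayes_post_of_senergy_diff:
  fixes E Ehat :: "'x::euclidean_space \<Rightarrow> nat \<Rightarrow> real"
  assumes diff: "\<And>z. z \<in> Z \<Longrightarrow>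
      senergy d z (Ehat x) - senergy d z (E x) = (ln (P x) - ln (N x)) + K z"
    and bias: "\<And>z. z \<in> Z \<Longrightarrow> B z = ln (partition d E z) - K z"
    and pos: "P x > 0" "N x > 0"
      "\<And>z. z \<in> Z \<Longrightarrow> partition d E z > 0" "\<And>z. z \<in> Z \<Longrightarrow> q z > 0"
    and qhat: "\<And>z. z \<in> Z \<Longrightarrow> qhat z = q z"
    and "z \<in> Z"
  shows "crm_post d Z qhat Ehat B z x = bayes_post Z q (cond_density d E) z x"
proof -
  have num: "exp (- senergy d z (Ehat x) + ln (qhat z) - B z)
      = N x / P x * (q z * cond_density d E z x)" if z: "z \<in> Z" for z
  proof -
    have "exp (- senergy d z (Ehat x) + ln (qhat z) - B z)
        = exp (- senergy d z (E x) + ln (q z) - ln (partition d E z) + ln (N x) - ln (P x))"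
      using diff[OF z] bias[OF z] qhat[OF z] by (intro arg_cong[where f = exp]) simp
    also have "\<dots> = N x / P x * (q z * cond_density d E z x)"
      using pos(1,2) pos(3,4)[OF z]
      by (simp add: exp_add exp_diff exp_minus cond_density_def field_simps)
    finally show ?thesis .
  qed
  have sum_num: "(\<Sum>z'\<in>Z. exp (- senergy d z' (Ehat x) + ln (qhat z') - B z'))
      = (\<Sum>z'\<in>Z. N x / P x * (q z' * cond_density d E z' x))"
    by (rule sum.cong[OF refl num])
  have "N x / P x \<noteq> 0"
    using pos(1,2) by simp
  then show ?thesis
    unfolding crm_post_def num[OF \<open>z \<in> Z\<close>] sum_num sum_distrib_left[symmetric]
      bayes_post_def
    by (rule mult_divide_mult_cancel_left)
qed

lemma support_eq_of_agree_on_subset: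
  fixes h q :: "'a \<Rightarrow> real"
  assumes "finite A" "B \<subseteq> A" "\<And>z. z \<in> A \<Longrightarrow> h z \<ge> 0" "sum h A = 1"
    and "\<And>z. z \<in> B \<Longrightarrow> h z = q z" "\<And>z. z \<in> B \<Longrightarrow> q z > 0" "sum q B = 1"
  shows "{z \<in> A. h z > 0} = B"
proof -
  have "sum h A = sum h (A - B) + sum h B"
    using sum.subset_diff[OF assms(2,1)] .
  moreover have "sum h B = 1"
    using assms(5,7) by simp
  ultimately have "sum h (A - B) = 0"
    using assms(4) by simp
  then have "\<forall>z\<in>A - B. h z = 0"
    using assms(1,3) sum_nonneg_eq_0_iff[of "A - B" h] by auto
  then show ?thesis
    using assms(2,5,6) by force
qed

lemma crm_post_eq_bayes_post_if_grid_connected: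
  fixes E Ehat :: "'x::euclidean_space \<Rightarrow> nat \<Rightarrow> real"
  assumes conn: "grid_connected d Ztr" and Ztr: "Ztr \<subseteq> grid d"
    and int: "\<forall>z\<in>grid d. integrable lborel (\<lambda>x. exp (- senergy d z (E x)))"
    and Ztest: "Ztest \<subseteq> grid d" "\<forall>z\<in>Ztest. q z > 0" "(\<Sum>z\<in>Ztest. q z) = 1"
    and ptr: "\<forall>z\<in>Ztr. ptr z > 0"
    and aec: "\<forall>z\<in>Ztr. \<forall>x. aec_post d Ztr ptr Ehat Bhat z x
                             = bayes_post Ztr ptr (cond_density d E) z x"
    and qhat: "\<forall>z\<in>grid d. qhat z \<ge> 0" "(\<Sum>z\<in>grid d. qhat z) = 1" "\<forall>z\<in>Ztest. qhat z = q z"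
    and z: "z \<in> Ztest"
  shows "crm_post d {z'\<in>grid d. qhat z' > 0} qhat Ehat
           (extrap_bias d Ztr ptr (cond_density d E) Ehat Bhat) z x
         = bayes_post Ztest q (cond_density d E) z x"
proof -
  define P where "P = marginal Ztr ptr (cond_density d E)"
  define N where "N = aec_norm d Ztr ptr Ehat Bhat"
  have fin: "finite (grid d)"
    by (simp add: grid_def)
  then have fin_Ztr: "finite Ztr"
    using Ztr by (rule finite_subset[rotated])
  have Ztr_ne: "Ztr \<noteq> {}"
    using grid_connected_nonempty[OF conn] z Ztest(1) by blast
  have part_pos: "partition d E z > 0" if "z \<in> grid d" for z
    using int that partition_pos by blast
  have Ppos: "P x > 0" for x
    unfolding P_def marginal_def cond_density_def using fin_Ztr Ztr Ztr_ne ptr part_pos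
    by (intro sum_pos) auto
  have Npos: "N x > 0" for x
    unfolding N_def aec_norm_def using fin_Ztr Ztr_ne by (intro sum_pos) auto
  have shift: "senergy d z (Ehat x) - senergy d z (E x)
      = (ln (P x) - ln (N x)) + (ln (partition d E z) - Bhat z)" if "z \<in> Ztr" for z x
    using that aec ptr part_pos[OF subsetD[OF Ztr that]] Ppos Npos unfolding P_def N_def
    by (intro aec_post_eq_bayes_post_imp_senergy_diff) auto
  obtain K where K: "\<And>z x. z \<in> grid d \<Longrightarrow>
      senergy d z (Ehat x) - senergy d z (E x) = (ln (P x) - ln (N x)) + K z"
    using senergy_shift_extend[where e = Ehat and e' = E, OF conn Ztr shift] by blast
  have bias: "extrap_bias d Ztr ptr (cond_density d E) Ehat Bhat z = ln (partition d E z) - K z"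
    if "z \<in> grid d" for z
    using extrap_bias_eq_of_senergy_diff K Ppos Npos part_pos that unfolding P_def N_def by blast
  have supp: "{z'\<in>grid d. qhat z' > 0} = Ztest"
    using fin Ztest qhat by (intro support_eq_of_agree_on_subset) auto
  show ?thesis
    unfolding supp using K bias Ppos Npos part_pos Ztest qhat z
    by (intro crm_post_eq_bayes_post_of_senergy_diff[where P = P and N = N and K = K]) auto
qed

definition nontrivial_cuts :: "nat \<Rightarrow> (nat set \<times> nat set) set" where
  "nontrivial_cuts d =
     {(S, T) \<in> Pow {1..d} \<times> Pow {1..d}. S \<noteq> {} \<and> (S, T) \<noteq> ({1..d}, {1..d})}"

lemma finite_nontrivial_cuts: "finite (nontrivial_cuts d)"
  by (rule finite_subset[of _ "Pow {1..d} \<times> Pow {1..d}"]) (auto simp: nontrivial_cuts_def)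

lemma samples_not_grid_connected_subset:
  "{f \<in> PiE {..<s} (\<lambda>_. grid d). \<not> grid_connected d (f ` {..<s})}
     \<subseteq> (\<Union>(S, T)\<in>nontrivial_cuts d. PiE {..<s} (\<lambda>_. noncrossing d S T))"
proof
  fix f assume f: "f \<in> {f \<in> PiE {..<s} (\<lambda>_. grid d). \<not> grid_connected d (f ` {..<s})}"
  then obtain S T where "S \<subseteq> {1..d}" "T \<subseteq> {1..d}" "S \<noteq> {}"
    and noncr: "f ` {..<s} \<subseteq> noncrossing d S T" and "\<not> (S = {1..d} \<and> T = {1..d})"
    unfolding grid_connected_def not_all not_imp mem_Collect_eq by (elim conjE exE) (rule that)
  then have "(S, T) \<in> nontrivial_cuts d"
    by (auto simp: nontrivial_cuts_def)
  moreover have "f \<in> PiE {..<s} (\<lambda>_. noncrossing d S T)"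
    using f noncr by (auto simp: PiE_iff)
  ultimately show "f \<in> (\<Union>(S, T)\<in>nontrivial_cuts d. PiE {..<s} (\<lambda>_. noncrossing d S T))"
    by blast
qed

lemma card_noncrossing:
  assumes "S \<subseteq> {1..d}" "T \<subseteq> {1..d}"
  shows "card (noncrossing d S T) = card S * card T + (d - card S) * (d - card T)"
proof -
  have fin: "finite S" "finite T"
    using assms finite_subset by auto
  then have "card (noncrossing d S T) = card (S \<times> T) + card (({1..d} - S) \<times> ({1..d} - T))"
    unfolding noncrossing_def by (intro card_Un_disjoint) auto
  then show ?thesis
    using assms fin by (simp add: card_cartesian_product card_Diff_subset)
qed

lemma crossing_weight_ge:
  fixes a b n :: real
  assumes "0 \<le> a" "0 \<le> b" "a + b \<le> n"
  shows "n * (a + b) \<le> 2 * (a * (n - b) + b * (n - a))"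
proof -
  have "a * (a - b) \<le> a * (n - 2 * b)" "b * (b - a) \<le> b * (n - 2 * a)"
    using assms by (auto intro: mult_left_mono)
  moreover have "0 \<le> (a - b) * (a - b)"
    by simp
  ultimately show ?thesis
    by (simp add: algebra_simps)
qed

lemma crossing_weight_ge_smaller_side:
  fixes a b n :: nat
  assumes "a \<le> n" "b \<le> n"
  obtains m where "m = a + b \<or> m = (n - a) + (n - b)"
    and "real n * real m \<le> 2 * (real a * (real n - real b) + real b * (real n - real a))"
proof (cases "a + b \<le> n")
  case True
  then show ?thesis
    using that[of "a + b"] crossing_weight_ge[of "real a" "real b" "real n"] by simp
next
  case False
  then show ?thesis
    using that[of "(n - a) + (n - b)"] assms
      crossing_weight_ge[of "real n - real a" "real n - real b" "real n"]
    by (simp add: of_nat_diff algebra_simps)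
qed

lemma one_minus_pow_le_exp:
  fixes w :: real
  assumes "0 \<le> 1 - w"
  shows "(1 - w) ^ s \<le> exp (- (real s * w))"
proof -
  have "(1 - w) ^ s \<le> exp (- w) ^ s"
    using assms exp_ge_add_one_self[of "- w"] by (intro power_mono) auto
  then show ?thesis
    by (simp add: exp_of_nat_mult[symmetric])
qed

lemma exp_neg_mult_ln_eq_pow:
  fixes n :: real
  assumes "0 < n"
  shows "exp (- (real (k * m) * ln n)) = (1 / n ^ k) ^ m"
proof -
  have "exp (- (real (k * m) * ln n)) = exp (real m * ln (1 / n ^ k))"
    using assms by (simp add: ln_div ln_realpow)
  also have "\<dots> = exp (ln (1 / n ^ k)) ^ m"
    by (rule exp_of_nat_mult)
  finally show ?thesis
    using assms by simp
qed

text \<open>A uniform grid point is noncrossing for a cut with \<open>|S| = a, |T| = b\<close> with probability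
  \<open>1 - w\<close>, where \<open>n\<^sup>2 w = a (n - b) + b (n - a)\<close> counts the crossing pairs. As \<open>2 n w\<close> is at
  least the number \<open>m\<close> of vertices on the smaller side of the cut,
  \<open>(1 - w)\<^sup>s \<le> exp (- s w) \<le> n\<^sup>-\<^sup>4\<^sup>m\<close>.\<close>
lemma noncrossing_fraction_pow_le:
  fixes a b n s :: nat
  assumes ab: "a \<le> n" "b \<le> n" and n: "2 \<le> n" and s: "8 * real n * ln (real n) \<le> real s"
  shows "(real (a * b + (n - a) * (n - b)) / real n ^ 2) ^ s
    \<le> (1 / real n ^ 4) ^ (a + b) + (1 / real n ^ 4) ^ ((n - a) + (n - b))"
proof -
  define c where "c = real a * (real n - real b) + real b * (real n - real a)"
  define w where "w = c / real n ^ 2"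
  have n0: "real n > 0"
    using n by simp
  have frac: "real (a * b + (n - a) * (n - b)) / real n ^ 2 = 1 - w"
    using ab n0 unfolding w_def c_def by (simp add: of_nat_diff field_simps power2_eq_square)
  have w0: "0 \<le> w"
    using ab unfolding w_def c_def by (intro divide_nonneg_nonneg) auto
  have "0 \<le> 1 - w"
    unfolding frac[symmetric] by simp
  then have pow_le: "(1 - w) ^ s \<le> exp (- (real s * w))"
    by (rule one_minus_pow_le_exp)
  obtain m where m: "m = a + b \<or> m = (n - a) + (n - b)" and mc: "real n * real m \<le> 2 * c"
    using crossing_weight_ge_smaller_side[OF ab] unfolding c_def by blast
  have m_le: "real m \<le> 2 * real n * w"
    using mc n0 unfolding w_def by (simp add: field_simps power2_eq_square)
  have "real (4 * m) * ln n = 4 * real m * ln n"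
    by simp
  also have "\<dots> \<le> 4 * (2 * real n * w) * ln n"
    using m_le n by (intro mult_right_mono mult_left_mono) auto
  also have "\<dots> = 8 * real n * ln n * w"
    by simp
  also have "\<dots> \<le> real s * w"
    using s w0 by (rule mult_right_mono)
  finally have "exp (- (real s * w)) \<le> (1 / real n ^ 4) ^ m"
    unfolding exp_neg_mult_ln_eq_pow[OF n0, symmetric] by simp
  moreover have "(1 / real n ^ 4) ^ m
      \<le> (1 / real n ^ 4) ^ (a + b) + (1 / real n ^ 4) ^ ((n - a) + (n - b))"
    using m by (elim disjE) simp_all
  ultimately show ?thesis
    unfolding frac using pow_le by linarith
qed

lemma sum_pow_card_Pow:
  fixes y :: "'a::comm_semiring_1"
  assumes "finite R"
  shows "(\<Sum>S\<in>Pow R. y ^ card S) = (1 + y) ^ card R"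
  using prod_add[OF assms, of "\<lambda>_. y" "\<lambda>_. 1"] by (simp add: add.commute)

lemma sum_pow_card_Diff_Pow:
  fixes y :: "'a::comm_semiring_1"
  assumes "finite R"
  shows "(\<Sum>S\<in>Pow R. y ^ card (R - S)) = (1 + y) ^ card R"
  using prod_add[OF assms, of "\<lambda>_. 1" "\<lambda>_. y"] by simp

lemma sum_pow_add_pairs:
  fixes y :: "'a::comm_semiring_1"
  shows "(\<Sum>(S, T)\<in>A \<times> A. y ^ (h S + h T)) = (\<Sum>S\<in>A. y ^ h S) ^ 2"
  by (simp add: power2_eq_square sum_product sum.cartesian_product power_add)

lemma sum_nontrivial_cuts_le:
  fixes y :: real
  assumes "0 \<le> y"
  shows "(\<Sum>(S, T)\<in>nontrivial_cuts d. y ^ (card S + card T) + y ^ ((d - card S) + (d - card T)))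
    \<le> 2 * ((1 + y) ^ (2 * d) - 1)"
proof -
  define R where "R = {1..d}"
  have fin_R: "finite R"
    by (simp add: R_def)
  have fin: "finite (Pow R \<times> Pow R)"
    by (simp add: R_def)
  have full: "(\<Sum>(S, T)\<in>Pow R \<times> Pow R. y ^ (card S + card T)) = (1 + y) ^ (2 * d)"
    "(\<Sum>(S, T)\<in>Pow R \<times> Pow R. y ^ (card (R - S) + card (R - T))) = (1 + y) ^ (2 * d)"
    unfolding sum_pow_add_pairs sum_pow_card_Pow[OF fin_R] sum_pow_card_Diff_Pow[OF fin_R]
    by (simp_all add: R_def power_mult[symmetric] mult.commute)
  have "(\<Sum>(S, T)\<in>nontrivial_cuts d. y ^ (card S + card T))
      \<le> (\<Sum>(S, T)\<in>Pow R \<times> Pow R - {({}, {})}. y ^ (card S + card T))"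
    using fin assms by (intro sum_mono2) (auto simp: nontrivial_cuts_def R_def)
  also have "\<dots> = (1 + y) ^ (2 * d) - 1"
    using fin full(1) by (simp add: sum_diff1)
  finally have small_sides:
    "(\<Sum>(S, T)\<in>nontrivial_cuts d. y ^ (card S + card T)) \<le> (1 + y) ^ (2 * d) - 1" .
  have "(\<Sum>(S, T)\<in>nontrivial_cuts d. y ^ ((d - card S) + (d - card T)))
      = (\<Sum>(S, T)\<in>nontrivial_cuts d. y ^ (card (R - S) + card (R - T)))"
    by (intro sum.cong) (auto simp: nontrivial_cuts_def R_def card_Diff_subset finite_subset)
  also have "\<dots> \<le> (\<Sum>(S, T)\<in>Pow R \<times> Pow R - {(R, R)}. y ^ (card (R - S) + card (R - T)))"
    using fin assms by (intro sum_mono2) (auto simp: nontrivial_cuts_def R_def)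
  also have "\<dots> = (1 + y) ^ (2 * d) - 1"
    using fin full(2) by (simp add: sum_diff1)
  finally have
    "(\<Sum>(S, T)\<in>nontrivial_cuts d. y ^ ((d - card S) + (d - card T))) \<le> (1 + y) ^ (2 * d) - 1" .
  with small_sides show ?thesis
    unfolding split_def sum.distrib mult_2 by (rule add_mono)
qed

lemma prob_samples_grid_connected_ge:
  assumes d: "2 \<le> d" and s: "8 * real d * ln (real d) \<le> real s"
  shows "1 - 2 * ((1 + 1 / real d ^ 4) ^ (2 * d) - 1)
    \<le> measure_pmf.prob (pmf_of_set (PiE {..<s} (\<lambda>_. grid d)))
         {f \<in> PiE {..<s} (\<lambda>_. grid d). grid_connected d (f ` {..<s})}"
proof -
  define \<Omega> where "\<Omega> = PiE {..<s} (\<lambda>_. grid d)"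
  define y where "y = 1 / real d ^ 4"
  let ?prob = "measure_pmf.prob (pmf_of_set \<Omega>)"
  let ?good = "{f \<in> \<Omega>. grid_connected d (f ` {..<s})}"
  let ?bad = "{f \<in> \<Omega>. \<not> grid_connected d (f ` {..<s})}"
  let ?box = "\<lambda>(S, T). PiE {..<s} (\<lambda>_. noncrossing d S T)"
  have fin: "finite \<Omega>"
    unfolding \<Omega>_def by (intro finite_PiE) (auto simp: grid_def)
  have ne: "\<Omega> \<noteq> {}"
    unfolding \<Omega>_def using d by (auto simp: PiE_eq_empty_iff grid_def)
  have card_\<Omega>: "card \<Omega> = (d ^ 2) ^ s"
    unfolding \<Omega>_def by (simp add: card_PiE grid_def card_cartesian_product power2_eq_square)
  have "?prob ?good + ?prob ?bad = ?prob (?good \<union> ?bad)"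
    by (rule measure_pmf.finite_measure_Union[symmetric]) auto
  also have "?good \<union> ?bad = \<Omega>"
    by auto
  also have "?prob \<Omega> = 1"
    using measure_pmf_of_set[OF ne fin] fin ne by simp
  finally have good: "?prob ?good = 1 - ?prob ?bad"
    by simp
  have prob_box: "?prob (?box (S, T)) = (real (card (noncrossing d S T)) / real d ^ 2) ^ s"
    if "(S, T) \<in> nontrivial_cuts d" for S T
  proof -
    have "noncrossing d S T \<subseteq> grid d"
      using that by (auto simp: nontrivial_cuts_def noncrossing_def grid_def)
    then have "\<Omega> \<inter> ?box (S, T) = ?box (S, T)"
      unfolding \<Omega>_def by (auto simp: PiE_iff)
    then show ?thesis
      using measure_pmf_of_set[OF ne fin] card_\<Omega> by (simp add: card_PiE power_divide power_mult)
  qed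
  have "?prob ?bad \<le> ?prob (\<Union>(?box ` nontrivial_cuts d))"
    using samples_not_grid_connected_subset unfolding \<Omega>_def
    by (intro measure_pmf.finite_measure_mono) auto
  also have "\<dots> \<le> (\<Sum>p\<in>nontrivial_cuts d. ?prob (?box p))"
    by (intro measure_pmf.finite_measure_subadditive_finite finite_nontrivial_cuts) auto
  also have "\<dots> = (\<Sum>(S, T)\<in>nontrivial_cuts d. (real (card (noncrossing d S T)) / real d ^ 2) ^ s)"
    using prob_box by (intro sum.cong) auto
  also have "\<dots> \<le> (\<Sum>(S, T)\<in>nontrivial_cuts d.
      y ^ (card S + card T) + y ^ ((d - card S) + (d - card T)))"
  proof (intro sum_mono, clarify)
    fix S T assume "(S, T) \<in> nontrivial_cuts d"
    then have ST: "S \<subseteq> {1..d}" "T \<subseteq> {1..d}"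
      by (auto simp: nontrivial_cuts_def)
    then have "card S \<le> d" "card T \<le> d"
      using card_mono[of "{1..d}"] by fastforce+
    then show "(real (card (noncrossing d S T)) / real d ^ 2) ^ s
        \<le> y ^ (card S + card T) + y ^ ((d - card S) + (d - card T))"
      unfolding card_noncrossing[OF ST] y_def using d s by (intro noncrossing_fraction_pow_le)
  qed
  also have "\<dots> \<le> 2 * ((1 + y) ^ (2 * d) - 1)"
    by (rule sum_nontrivial_cuts_le) (simp add: y_def)
  finally show ?thesis
    using good unfolding \<Omega>_def y_def by linarith
qed

lemma connectivity_failure_bound_tendsto_zero:
  "(\<lambda>d. 2 * ((1 + 1 / real d ^ 4) ^ (2 * d) - 1)) \<longlonglongrightarrow> 0"
  by real_asymp

theorem theorem6:
  fixes c :: real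
  assumes "c > 0"
  shows "\<exists>d0::nat. \<forall>d\<ge>d0. \<forall>s::nat. real s \<ge> 8 * c * real d * ln (real d) \<longrightarrow>
    (\<forall>(E :: real^'n \<Rightarrow> nat \<Rightarrow> real) (q :: nat \<times> nat \<Rightarrow> real) Ztest.
       (\<forall>z\<in>grid d. integrable lborel (\<lambda>x. exp (- senergy d z (E x)))) \<and>
       Ztest \<subseteq> grid d \<and> (\<forall>z\<in>Ztest. q z > 0) \<and> (\<Sum>z\<in>Ztest. q z) = 1 \<longrightarrow>
       measure_pmf.prob (pmf_of_set (PiE {..<s} (\<lambda>_. grid d)))
         {f. let Ztr = f ` {..<s} in
             \<forall>(ptr :: nat \<times> nat \<Rightarrow> real) (Ehat :: real^'n \<Rightarrow> nat \<Rightarrow> real)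
               (Bhat :: nat \<times> nat \<Rightarrow> real) (qhat :: nat \<times> nat \<Rightarrow> real).
               (\<forall>z\<in>Ztr. ptr z > 0) \<and> (\<Sum>z\<in>Ztr. ptr z) = 1 \<and>
               (\<forall>z\<in>Ztr. \<forall>x. aec_post d Ztr ptr Ehat Bhat z x
                              = bayes_post Ztr ptr (cond_density d E) z x) \<and>
               (\<forall>z\<in>grid d. qhat z \<ge> 0) \<and> (\<Sum>z\<in>grid d. qhat z) = 1 \<and>
               (\<forall>z\<in>Ztest. qhat z = q z)
               \<longrightarrow>
               (\<forall>z\<in>Ztest. \<forall>x.
                  crm_post d {z'\<in>grid d. qhat z' > 0} qhat Ehat
                    (extrap_bias d Ztr ptr (cond_density d E) Ehat Bhat) z x
                  = bayes_post Ztest q (cond_density d E) z x)}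
       > 1 - 1 / c)"
proof -
  obtain d1 where d1: "\<And>d. d1 \<le> d \<Longrightarrow> 2 * ((1 + 1 / real d ^ 4) ^ (2 * d) - 1) < 1 / c"
    using order_tendstoD(2)[OF connectivity_failure_bound_tendsto_zero, of "1 / c"] assms
    unfolding eventually_sequentially by auto
  show ?thesis
  proof (intro exI[of _ "max d1 2"] allI impI, elim conjE, goal_cases)
    case (1 d s E q Ztest)
    define \<Omega> where "\<Omega> = PiE {..<s} (\<lambda>_. grid d)"
    have "1 - 1 / c < measure_pmf.prob (pmf_of_set \<Omega>) {f \<in> \<Omega>. grid_connected d (f ` {..<s})}"
    proof (cases "c < 1")
      case True
      then have "1 - 1 / c < 0"
        using assms by (simp add: field_simps)
      then show ?thesis
        using measure_nonneg by (rule less_le_trans)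
    next
      case False
      have "8 * real d * ln (real d) \<le> 8 * c * real d * ln (real d)"
        using False 1(1) by (intro mult_right_mono) auto
      then show ?thesis
        using prob_samples_grid_connected_ge[of d s] d1[of d] 1(1,2) unfolding \<Omega>_def by simp
    qed
    then show ?case
      unfolding \<Omega>_def using 1
      by (elim less_le_trans, intro measure_pmf.finite_measure_mono)
        (auto simp: Let_def PiE_iff intro!: crm_post_eq_bayes_post_if_grid_connected)
  qed
qed

end
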